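(* Let $(A,\mu,\alpha,\beta)$ be a BiHom-commutative algebra (with $\mu(a\otimes b)=a\cdot b$). Let $p$ and $r$ be natural numbers and let $D:A\to A$ be a linear map commuting with $\alpha$ and $\beta$ such that $D(a\cdot b)=\beta^r(a)\cdot D(b)+D(a)\cdot\beta^r(b)$ for all $a,b\in A$. Define $a\ast b=\alpha^p(a)\cdot D(b)$. Then $(A,\ast,\alpha^{p+1},\beta^{r+1})$ is a BiHom-Novikov algebra.
   Context: Work over a field. A BiHom-associative algebra is a 4-tuple $(A,\mu,\alpha,\beta)$ with $\alpha,\beta$ commuting linear maps, multiplicative for $\mu$, and $\alpha(x)\cdot(y\cdot z)=(x\cdot y)\cdot\beta(z)$; it is BiHom-commutative if $\beta(a)\cdot\alpha(b)=\beta(b)\cdot\alpha(a)$ for all $a,b$. A BiHom-Novikov algebra is a 4-tuple $(A,\ast,\alpha',\beta')$ with commuting linear maps $\alpha',\beta'$ multiplicative for $\ast$ such that for all $x,y,z$: $(\beta'(x)\ast\alpha'(y))\ast\beta'(z)-\alpha'\beta'(x)\ast(\alpha'(y)\ast z)=(\beta'(y)\ast\alpha'(x))\ast\beta'(z)-\alpha'\beta'(y)\ast(\alpha'(x)\ast z)$ and $(x\ast\beta'(y))\ast\alpha'\beta'(z)=(x\ast\beta'(z))\ast\alpha'\beta'(y)$. *)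

theory Defs
  imports Main "HOL.Vector_Spaces"
begin

definition bilinear_map :: "('k::field \<Rightarrow> 'v::ab_group_add \<Rightarrow> 'v) \<Rightarrow> ('v \<Rightarrow> 'v \<Rightarrow> 'v) \<Rightarrow> bool" where
  "bilinear_map scale mu \<longleftrightarrow>
     (\<forall>x. Vector_Spaces.linear scale scale (mu x)) \<and>
     (\<forall>y. Vector_Spaces.linear scale scale (\<lambda>x. mu x y))"

definition bihom_associative_algebra ::
  "('k::field \<Rightarrow> 'v::ab_group_add \<Rightarrow> 'v) \<Rightarrow> ('v \<Rightarrow> 'v \<Rightarrow> 'v) \<Rightarrow> ('v \<Rightarrow> 'v) \<Rightarrow> ('v \<Rightarrow> 'v) \<Rightarrow> bool" where
  "bihom_associative_algebra scale mu alpha beta \<longleftrightarrow>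
     vector_space scale \<and> bilinear_map scale mu \<and>
     Vector_Spaces.linear scale scale alpha \<and> Vector_Spaces.linear scale scale beta \<and>
     alpha \<circ> beta = beta \<circ> alpha \<and>
     (\<forall>x y. alpha (mu x y) = mu (alpha x) (alpha y)) \<and>
     (\<forall>x y. beta (mu x y) = mu (beta x) (beta y)) \<and>
     (\<forall>x y z. mu (alpha x) (mu y z) = mu (mu x y) (beta z))"

definition bihom_commutative_algebra ::
  "('k::field \<Rightarrow> 'v::ab_group_add \<Rightarrow> 'v) \<Rightarrow> ('v \<Rightarrow> 'v \<Rightarrow> 'v) \<Rightarrow> ('v \<Rightarrow> 'v) \<Rightarrow> ('v \<Rightarrow> 'v) \<Rightarrow> bool" where
  "bihom_commutative_algebra scale mu alpha beta \<longleftrightarrow>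
     bihom_associative_algebra scale mu alpha beta \<and>
     (\<forall>a b. mu (beta a) (alpha b) = mu (beta b) (alpha a))"

definition bihom_novikov_algebra ::
  "('k::field \<Rightarrow> 'v::ab_group_add \<Rightarrow> 'v) \<Rightarrow> ('v \<Rightarrow> 'v \<Rightarrow> 'v) \<Rightarrow> ('v \<Rightarrow> 'v) \<Rightarrow> ('v \<Rightarrow> 'v) \<Rightarrow> bool" where
  "bihom_novikov_algebra scale m al be \<longleftrightarrow>
     vector_space scale \<and> bilinear_map scale m \<and>
     Vector_Spaces.linear scale scale al \<and> Vector_Spaces.linear scale scale be \<and>
     al \<circ> be = be \<circ> al \<and>
     (\<forall>x y. al (m x y) = m (al x) (al y)) \<and>
     (\<forall>x y. be (m x y) = m (be x) (be y)) \<and>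
     (\<forall>x y z. m (m (be x) (al y)) (be z) - m (al (be x)) (m (al y) z)
             = m (m (be y) (al x)) (be z) - m (al (be y)) (m (al x) z)) \<and>
     (\<forall>x y z. m (m x (be y)) (al (be z)) = m (m x (be z)) (al (be y)))"

end

theory Submission
  imports Defs
begin

text \<open>With \<open>a \<ast> b = \<alpha>\<^sup>p(a) D(b)\<close>, every term of the two Novikov identities can be brought to
  the shape of a product in \<open>A\<close> whose factors are images of the arguments under powers of
  \<open>\<alpha>\<close>, \<open>\<beta>\<close> and \<open>D\<close>. BiHom-associativity and BiHom-commutativity give the twisted
  right and left commutativity laws \<open>(x \<beta>y) \<beta>\<alpha>z = (x \<beta>z) \<beta>\<alpha>y\<close> and
  \<open>\<alpha>\<beta>x (\<alpha>y z) = \<alpha>\<beta>y (\<alpha>x z)\<close>. The second identity is an instance of the first law. In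
  the first identity, expanding \<open>D\<close> of a product with the Leibniz rule produces a term that
  cancels the first summand once it is rewritten by BiHom-associativity; what remains is an
  instance of the second law.\<close>

lemma linear_funpow:
  assumes "vector_space s" and "Vector_Spaces.linear s s f"
  shows "Vector_Spaces.linear s s (f ^^ n)"
proof (induction n)
  case 0
  show ?case using assms(1) by (simp add: linear_iff)
next
  case (Suc n)
  then show ?case using assms(2) by (simp add: linear_iff)
qed

lemma funpow_commute_apply:
  assumes "\<And>x. f (g x) = g (f x)"
  shows "(f ^^ n) (g x) = g ((f ^^ n) x)"
  by (induction n) (simp_all add: assms)

lemma funpow_funpow_commute_apply:
  assumes "\<And>x. f (g x) = g (f x)"
  shows "(f ^^ n) ((g ^^ m) x) = (g ^^ m) ((f ^^ n) x)"
  by (metis assms funpow_commute_apply)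

lemma funpow_hom_apply:
  assumes "\<And>x y. f (mu x y) = mu (f x) (f y)"
  shows "(f ^^ n) (mu x y) = mu ((f ^^ n) x) ((f ^^ n) y)"
  by (induction n) (simp_all add: assms)

lemma bilinear_map_compose:
  assumes "bilinear_map s mu" and "Vector_Spaces.linear s s f" and "Vector_Spaces.linear s s g"
  shows "bilinear_map s (\<lambda>a b. mu (f a) (g b))"
  using assms Vector_Spaces.linear_compose[of s s g s "mu _"]
    Vector_Spaces.linear_compose[of s s f s "\<lambda>x. mu x _"]
  unfolding bilinear_map_def by (simp add: o_def)

locale bihom_commutative =
  fixes scale :: "'k::field \<Rightarrow> 'v::ab_group_add \<Rightarrow> 'v"
    and mu :: "'v \<Rightarrow> 'v \<Rightarrow> 'v"
    and alpha beta :: "'v \<Rightarrow> 'v"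
  assumes bihom_commutative: "bihom_commutative_algebra scale mu alpha beta"
begin

lemma vector_space: "vector_space scale"
  and bilinear: "bilinear_map scale mu"
  and linear_alpha: "Vector_Spaces.linear scale scale alpha"
  and linear_beta: "Vector_Spaces.linear scale scale beta"
  and alpha_beta: "alpha (beta x) = beta (alpha x)"
  and alpha_mu: "alpha (mu x y) = mu (alpha x) (alpha y)"
  and beta_mu: "beta (mu x y) = mu (beta x) (beta y)"
  and assoc: "mu (alpha x) (mu y z) = mu (mu x y) (beta z)"
  and comm: "mu (beta a) (alpha b) = mu (beta b) (alpha a)"
  using bihom_commutative
  unfolding bihom_commutative_algebra_def bihom_associative_algebra_def
  by (auto simp: fun_eq_iff)

lemma mu_add_right: "mu a (b + c) = mu a b + mu a c"
  using bilinear unfolding bilinear_map_def linear_iff by blast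

lemma mu_right_commute: "mu (mu x (beta y)) (beta (alpha z)) = mu (mu x (beta z)) (beta (alpha y))"
proof -
  have "mu (mu x (beta y)) (beta (alpha z)) = mu (alpha x) (mu (beta y) (alpha z))"
    by (rule assoc[symmetric])
  also have "\<dots> = mu (alpha x) (mu (beta z) (alpha y))"
    by (simp only: comm)
  finally show ?thesis
    by (simp only: assoc)
qed

lemma mu_left_commute: "mu (alpha (beta x)) (mu (alpha y) z) = mu (alpha (beta y)) (mu (alpha x) z)"
proof -
  have "mu (alpha (beta x)) (mu (alpha y) z) = mu (mu (beta x) (alpha y)) (beta z)"
    by (rule assoc)
  also have "\<dots> = mu (mu (beta y) (alpha x)) (beta z)"
    by (simp only: comm)
  finally show ?thesis
    by (simp only: assoc)
qed

lemma alpha_pow_beta_pow: "(alpha ^^ n) ((beta ^^ m) x) = (beta ^^ m) ((alpha ^^ n) x)"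
  by (rule funpow_funpow_commute_apply) (rule alpha_beta)

lemma alpha_pow_mu: "(alpha ^^ n) (mu x y) = mu ((alpha ^^ n) x) ((alpha ^^ n) y)"
  and beta_pow_mu: "(beta ^^ n) (mu x y) = mu ((beta ^^ n) x) ((beta ^^ n) y)"
  using funpow_hom_apply[of alpha mu] funpow_hom_apply[of beta mu] alpha_mu beta_mu by blast+

lemma alpha_pow_alpha_pow: "(alpha ^^ n) ((alpha ^^ m) x) = (alpha ^^ m) ((alpha ^^ n) x)"
  by (rule funpow_funpow_commute_apply) (rule refl)

lemma alpha_pow_beta: "(alpha ^^ n) (beta x) = beta ((alpha ^^ n) x)"
  and alpha_beta_pow: "alpha ((beta ^^ m) x) = (beta ^^ m) (alpha x)"
  using alpha_pow_beta_pow[of n 1] alpha_pow_beta_pow[of 1 m] by simp_all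

end

locale bihom_commutative_derivation = bihom_commutative +
  fixes D :: "'v::ab_group_add \<Rightarrow> 'v"
    and r :: nat
  assumes linear_D: "Vector_Spaces.linear scale scale D"
    and D_comp_alpha: "D \<circ> alpha = alpha \<circ> D" and D_comp_beta: "D \<circ> beta = beta \<circ> D"
    and D_mu: "\<forall>a b. D (mu a b) = mu ((beta ^^ r) a) (D b) + mu (D a) ((beta ^^ r) b)"
begin

lemma D_alpha_pow: "D ((alpha ^^ n) x) = (alpha ^^ n) (D x)"
  and D_beta_pow: "D ((beta ^^ n) x) = (beta ^^ n) (D x)"
  using D_comp_alpha D_comp_beta
  by (auto intro!: funpow_commute_apply[symmetric] simp: fun_eq_iff)

lemma D_alpha: "D (alpha x) = alpha (D x)"
  and D_beta: "D (beta x) = beta (D x)"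
  using D_alpha_pow[of 1] D_beta_pow[of 1] by simp_all

lemmas normalize = alpha_mu beta_mu alpha_pow_mu beta_pow_mu D_alpha D_beta D_alpha_pow D_beta_pow
  alpha_beta alpha_pow_beta alpha_beta_pow alpha_pow_beta_pow funpow_swap1[symmetric] alpha_pow_alpha_pow

definition novikov_mult :: "nat \<Rightarrow> 'v \<Rightarrow> 'v \<Rightarrow> 'v" where
  "novikov_mult p a b = mu ((alpha ^^ p) a) (D b)"

lemma bilinear_novikov_mult: "bilinear_map scale (novikov_mult p)"
  unfolding novikov_mult_def[abs_def]
  by (rule bilinear_map_compose[OF bilinear linear_funpow[OF vector_space linear_alpha] linear_D])

lemma alpha_pow_novikov_mult:
  "(alpha ^^ n) (novikov_mult p a b) = novikov_mult p ((alpha ^^ n) a) ((alpha ^^ n) b)"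
  by (simp add: novikov_mult_def alpha_pow_mu D_alpha_pow alpha_pow_alpha_pow)

lemma beta_pow_novikov_mult:
  "(beta ^^ n) (novikov_mult p a b) = novikov_mult p ((beta ^^ n) a) ((beta ^^ n) b)"
  by (simp add: novikov_mult_def beta_pow_mu D_beta_pow alpha_pow_beta_pow)

lemma novikov_mult_right_commute:
  "novikov_mult p (novikov_mult p x ((beta ^^ (r + 1)) y)) ((alpha ^^ (p + 1)) ((beta ^^ (r + 1)) z))
   = novikov_mult p (novikov_mult p x ((beta ^^ (r + 1)) z)) ((alpha ^^ (p + 1)) ((beta ^^ (r + 1)) y))"
  (is "?L y z = ?L z y")
proof -
  define T where "T w = (alpha ^^ p) ((beta ^^ r) (D w))" for w
  have "?L y z = mu (mu ((alpha ^^ p) ((alpha ^^ p) x)) (beta (T y))) (beta (alpha (T z)))" for y z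
    by (simp add: novikov_mult_def T_def normalize)
  then show ?thesis
    by (simp only: mu_right_commute)
qed

lemma novikov_mult_left_symmetric:
  "novikov_mult p (novikov_mult p ((beta ^^ (r + 1)) x) ((alpha ^^ (p + 1)) y)) ((beta ^^ (r + 1)) z)
     - novikov_mult p ((alpha ^^ (p + 1)) ((beta ^^ (r + 1)) x))
         (novikov_mult p ((alpha ^^ (p + 1)) y) z)
   = novikov_mult p (novikov_mult p ((beta ^^ (r + 1)) y) ((alpha ^^ (p + 1)) x)) ((beta ^^ (r + 1)) z)
     - novikov_mult p ((alpha ^^ (p + 1)) ((beta ^^ (r + 1)) y))
         (novikov_mult p ((alpha ^^ (p + 1)) x) z)"
  (is "?A x y - ?B x y = ?A y x - ?B y x")
proof -
  define S where "S w = (alpha ^^ p) ((alpha ^^ p) ((beta ^^ r) w))" for w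
  define T where "T w = (alpha ^^ p) ((alpha ^^ p) (D w))" for w
  have "?A x y - ?B x y = - mu (alpha (beta (S x))) (mu (alpha (S y)) (D (D z)))" for x y
  proof -
    have "?A x y = mu (mu (beta (S x)) (alpha (T y))) (beta ((beta ^^ r) (D z)))"
      by (simp add: novikov_mult_def S_def T_def normalize)
    also have "\<dots> = mu (alpha (beta (S x))) (mu (alpha (T y)) ((beta ^^ r) (D z)))"
      by (rule assoc[symmetric])
    moreover have "?B x y = mu (alpha (beta (S x))) (mu (alpha (S y)) (D (D z)))
        + mu (alpha (beta (S x))) (mu (alpha (T y)) ((beta ^^ r) (D z)))"
      by (simp add: novikov_mult_def S_def T_def normalize D_mu mu_add_right)
    ultimately show ?thesis
      by simp
  qed
  then show ?thesis
    by (simp only: mu_left_commute)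
qed

theorem bihom_novikov_algebra_novikov_mult:
  "bihom_novikov_algebra scale (novikov_mult p) (alpha ^^ (p + 1)) (beta ^^ (r + 1))"
  unfolding bihom_novikov_algebra_def
  by (intro conjI allI vector_space bilinear_novikov_mult linear_funpow linear_alpha linear_beta
      alpha_pow_novikov_mult beta_pow_novikov_mult novikov_mult_right_commute
      novikov_mult_left_symmetric)
    (simp only: fun_eq_iff comp_apply alpha_pow_beta_pow simp_thms)

end

theorem corollary2p8:
  fixes scale :: "'k::field \<Rightarrow> 'v::ab_group_add \<Rightarrow> 'v"
    and mu :: "'v \<Rightarrow> 'v \<Rightarrow> 'v"
    and alpha beta D :: "'v \<Rightarrow> 'v"
    and p r :: nat
  assumes "bihom_commutative_algebra scale mu alpha beta"
    and "Vector_Spaces.linear scale scale D"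
    and "D \<circ> alpha = alpha \<circ> D" and "D \<circ> beta = beta \<circ> D"
    and "\<forall>a b. D (mu a b) = mu ((beta ^^ r) a) (D b) + mu (D a) ((beta ^^ r) b)"
  shows "bihom_novikov_algebra scale (\<lambda>a b. mu ((alpha ^^ p) a) (D b))
           (alpha ^^ (p + 1)) (beta ^^ (r + 1))"
proof -
  interpret bihom_commutative_derivation scale mu alpha beta D r
    using assms by (intro bihom_commutative_derivation.intro bihom_commutative.intro
        bihom_commutative_derivation_axioms.intro)
  show ?thesis
    using bihom_novikov_algebra_novikov_mult[of p] unfolding novikov_mult_def[abs_def] .
qed

end
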